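(* Let $m_1,m_2\ge 0$ be integers and $\lambda=m_1\omega_1+m_2\omega_2$. Then in the representation ring of $\mathfrak{sl}_3$, \begin{align*} \psi_2(V_{\lambda}) &= \sum_{l=0}^{\min\{m_1,m_2\}}\sum_{k=0}^{m_1-l}(-1)^k\, V_{2\lambda-k\alpha_1-2l(\alpha_1+\alpha_2)} + \sum_{l=0}^{\min\{m_1,m_2\}}\sum_{k=0}^{m_2-l}(-1)^k\, V_{2\lambda-k\alpha_2-2l(\alpha_1+\alpha_2)} \\ &\quad - \sum_{l=0}^{\min\{m_1,m_2\}} V_{2\lambda-2l(\alpha_1+\alpha_2)}. \end{align*} Equivalently, writing $V_{a,b}=V_{a\omega_1+b\omega_2}$, the three sums are over $V_{2m_1-2k-2l,\,2m_2+k-2l}$, $V_{2m_1+k-2l,\,2m_2-2k-2l}$ and $V_{2m_1-2l,\,2m_2-2l}$ respectively.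
   Context: $\mathfrak{sl}_3$ has simple roots $\alpha_1=(1,-1,0)$, $\alpha_2=(0,1,-1)$ and fundamental weights $\omega_1=\frac13(2\alpha_1+\alpha_2)$, $\omega_2=\frac13(\alpha_1+2\alpha_2)$ (so $\alpha_1=2\omega_1-\omega_2$, $\alpha_2=-\omega_1+2\omega_2$). $V_\mu$ denotes the irreducible representation with dominant highest weight $\mu$. $\psi_2$ is the second Adams operation on the representation ring (virtual representations), i.e. the ring endomorphism characterized on characters by $\mathrm{ch}(\psi_2 V)(t)=\mathrm{ch}(V)(t^2)$ for $t$ in the maximal torus; equivalently, on characters viewed as symmetric functions in $x_1,x_2,x_3$ with $x_1x_2x_3=1$, it sends $f(x_1,x_2,x_3)$ to $f(x_1^2,x_2^2,x_3^2)$. *)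

theory Defs
  imports Complex_Main
begin

text \<open>Character of the irreducible sl3-representation V_{a w1 + b w2}, as a function on the
maximal torus {(x1,x2,x3). x1 x2 x3 = 1}: it is the Schur polynomial of the partition
(a+b, b, 0), written as the sum over Gelfand-Tsetlin patterns with top row (a+b, b, 0),
middle row (m1, m2) and bottom entry n.\<close>
definition sl3_char :: "nat \<Rightarrow> nat \<Rightarrow> complex \<Rightarrow> complex \<Rightarrow> complex \<Rightarrow> complex" where
  "sl3_char a b x1 x2 x3 =
     (\<Sum>m1\<in>{b..a+b}. \<Sum>m2\<in>{0..b}. \<Sum>n\<in>{m2..m1}.
        x1 ^ n * x2 ^ (m1 + m2 - n) * x3 ^ (a + 2*b - m1 - m2))"

definition adams2 :: "(complex \<Rightarrow> complex \<Rightarrow> complex \<Rightarrow> complex) \<Rightarrow> complex \<Rightarrow> complex \<Rightarrow> complex \<Rightarrow> complex" where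
  "adams2 f x1 x2 x3 = f (x1^2) (x2^2) (x3^2)"

end

theory Submission
  imports Defs
begin

text \<open>Multiplying by the Vandermonde product D turns characters into alternants: by Weyl's
character formula, read off here from the Gelfand-Tsetlin sum, D times the character of V(a,b)
is the antisymmetrization A(a + b + 2, b + 1, 0) of the monomial x^(a+b+2) y^(b+1). Since
D(x^2, y^2, z^2) = D P with P = (x + y)(x + z)(y + z), the left-hand side times D P is
A(2 m1 + 2 m2 + 4, 2 m2 + 2, 0). On the right, D times the l-th summand (over l) of the right-hand side is an
alternating sum of alternants; multiplied by P, the alternating sums collapse like geometric
series and the remainders are symmetric in two variables, so the summand becomes
A(..., 2l) - A(..., 2l + 2) and the summands telescope to the left-hand side. After homogenizing by
powers of x y z the identity is polynomial, so it holds off the zero set of D P and hence, by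
continuity, everywhere.\<close>

definition antisym3 :: "('a \<Rightarrow> 'a \<Rightarrow> 'a \<Rightarrow> 'a::comm_ring_1) \<Rightarrow> 'a \<Rightarrow> 'a \<Rightarrow> 'a \<Rightarrow> 'a" where
  "antisym3 f x y z = f x y z - f x z y - f y x z + f y z x + f z x y - f z y x"

definition alternant :: "nat \<Rightarrow> nat \<Rightarrow> nat \<Rightarrow> 'a \<Rightarrow> 'a \<Rightarrow> 'a \<Rightarrow> 'a::comm_ring_1" where
  "alternant p q r = antisym3 (\<lambda>a b c. a^p * b^q * c^r)"

definition vandermonde3 :: "'a \<Rightarrow> 'a \<Rightarrow> 'a \<Rightarrow> 'a::comm_ring_1" where
  "vandermonde3 x y z = (x - y) * (x - z) * (y - z)"

definition pair_sums3 :: "'a \<Rightarrow> 'a \<Rightarrow> 'a \<Rightarrow> 'a::comm_ring_1" where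
  "pair_sums3 x y z = (x + y) * (x + z) * (y + z)"

lemma antisym3_sum:
  "antisym3 (\<lambda>a b c. \<Sum>k\<in>K. f k a b c) x y z = (\<Sum>k\<in>K. antisym3 (f k) x y z)"
  by (simp add: antisym3_def sum_subtractf sum.distrib)

lemma antisym3_add:
  "antisym3 (\<lambda>a b c. f a b c + g a b c) x y z = antisym3 f x y z + antisym3 g x y z"
  by (simp add: antisym3_def algebra_simps)

lemma antisym3_diff:
  "antisym3 (\<lambda>a b c. f a b c - g a b c) x y z = antisym3 f x y z - antisym3 g x y z"
  by (simp add: antisym3_def algebra_simps)

lemma antisym3_const_mult:
  "antisym3 (\<lambda>a b c. u * f a b c) x y z = u * antisym3 f x y z"
  by (simp add: antisym3_def algebra_simps)

lemma pair_sums3_mult_antisym3: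
  "pair_sums3 x y z * antisym3 f x y z = antisym3 (\<lambda>a b c. pair_sums3 a b c * f a b c) x y z"
  by (simp add: antisym3_def pair_sums3_def algebra_simps)

lemma antisym3_eq_0_if_swap12_invariant:
  assumes "\<And>a b c. f a b c = f b a c"
  shows "antisym3 f x y z = 0"
  using assms[of x y z] assms[of y z x] assms[of z x y] by (simp add: antisym3_def)

lemma antisym3_eq_0_if_swap23_invariant:
  assumes "\<And>a b c. f a b c = f a c b"
  shows "antisym3 f x y z = 0"
  using assms[of x y z] assms[of y x z] assms[of z x y] by (simp add: antisym3_def)

lemma alternant_eq_0_12 [simp]: "alternant p p r x y z = 0"
  by (simp add: alternant_def antisym3_def algebra_simps)

lemma alternant_eq_0_23 [simp]: "alternant p q q x y z = 0"
  by (simp add: alternant_def antisym3_def algebra_simps)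

lemma prod_power_mult_alternant:
  "(x * y * z) ^ c * alternant p q r x y z = alternant (p + c) (q + c) (r + c) x y z"
  by (simp add: alternant_def antisym3_def algebra_simps power_add power_mult_distrib)

lemma alternant_squares:
  "alternant p q r (x^2) (y^2) (z^2) = alternant (2*p) (2*q) (2*r) x y z"
  by (simp add: alternant_def antisym3_def power_mult[symmetric] mult.commute)

lemma vandermonde3_squares:
  "vandermonde3 (x^2) (y^2) (z^2) = vandermonde3 x y z * pair_sums3 x y z"
  by (simp add: vandermonde3_def pair_sums3_def power2_eq_square algebra_simps)

lemma diff_mult_sum_power_ivl:
  fixes y z :: "'a::comm_ring_1"
  assumes "lo \<le> hi"
  shows "(y - z) * (\<Sum>n=lo..hi. y^n * z^(hi - n)) = y^Suc hi - y^lo * z^(Suc hi - lo)"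
  using assms
proof (induction hi rule: nat_induct_at_least)
  case base
  then show ?case by (simp add: algebra_simps)
next
  case (Suc hi)
  have "(\<Sum>n=lo..Suc hi. y^n * z^(Suc hi - n)) = z * (\<Sum>n=lo..hi. y^n * z^(hi - n)) + y^Suc hi"
    using Suc.hyps by (simp add: sum_distrib_left Suc_diff_le mult.left_commute)
  also have "(y - z) * \<dots> = z * ((y - z) * (\<Sum>n=lo..hi. y^n * z^(hi - n))) + (y - z) * y^Suc hi"
    by (simp add: algebra_simps)
  also have "\<dots> = y^Suc (Suc hi) - y^lo * z^(Suc (Suc hi) - lo)"
    using Suc.hyps by (simp only: Suc.IH) (simp add: Suc_diff_le algebra_simps)
  finally show ?case .
qed

lemma add_mult_alternating_power_sum:
  fixes a b :: "'a::comm_ring_1"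
  shows "(a + b) * (\<Sum>k=0..p. (-1)^k * (a^(p - k) * b^k)) = a^Suc p + (-1)^p * b^Suc p"
proof -
  have "(\<Sum>k=0..p. (-1)^k * (a^(p - k) * b^k)) = (\<Sum>k=0..p. (-b)^k * a^(p - k))"
    by (metis mult.assoc mult.commute power_minus)
  then have "(a + b) * (\<Sum>k=0..p. (-1)^k * (a^(p - k) * b^k)) = - ((-b - a) * (\<Sum>k=0..p. (-b)^k * a^(p - k)))"
    by (simp add: algebra_simps)
  also have "\<dots> = a^Suc p - (-b)^Suc p"
    using diff_mult_sum_power_ivl[of 0 p "-b" a] by simp
  also have "(-b)^Suc p = - ((-1)^p * b^Suc p)"
    by (simp add: power_minus[of b])
  finally show ?thesis by simp
qed

lemma diff_mult_sum_power_symmetric: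
  fixes x y :: "'a::comm_ring_1"
  assumes "lo \<le> hi"
  shows "(x - y) * (\<Sum>n=lo..hi. x^n * y^(lo + hi - n)) = x^Suc hi * y^lo - x^lo * y^Suc hi"
proof -
  have "(\<Sum>n=lo..hi. x^n * y^(lo + hi - n)) = y^lo * (\<Sum>n=lo..hi. x^n * y^(hi - n))"
    unfolding sum_distrib_left
  proof (rule sum.cong)
    fix n assume "n \<in> {lo..hi}"
    then have "lo + hi - n = lo + (hi - n)" by auto
    then show "x^n * y^(lo + hi - n) = y^lo * (x^n * y^(hi - n))"
      by (simp add: power_add mult.left_commute)
  qed simp
  then have "(x - y) * (\<Sum>n=lo..hi. x^n * y^(lo + hi - n)) = y^lo * ((x - y) * (\<Sum>n=lo..hi. x^n * y^(hi - n)))"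
    by (simp add: mult.left_commute)
  also have "\<dots> = x^Suc hi * y^lo - x^lo * (y^lo * y^(Suc hi - lo))"
    unfolding diff_mult_sum_power_ivl[OF assms] by (simp add: algebra_simps)
  also have "y^lo * y^(Suc hi - lo) = y^Suc hi"
    using assms by (simp flip: power_add)
  finally show ?thesis .
qed

lemma vandermonde3_mult_sl3_char:
  "vandermonde3 x y z * sl3_char a b x y z = alternant (a + b + 2) (b + 1) 0 x y z"
proof -
  define X where "X u = (\<Sum>m1=b..a+b. u^m1 * z^(a + b - m1))" for u
  define Y where "Y u = (\<Sum>m2=0..b. u^m2 * z^(b - m2))" for u
  have "(x - y) * sl3_char a b x y z =
      (\<Sum>m1=b..a+b. \<Sum>m2=0..b. z^(a + b - m1) * z^(b - m2) * ((x - y) * (\<Sum>n=m2..m1. x^n * y^(m2 + m1 - n))))"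
    unfolding sl3_char_def sum_distrib_left
    by (intro sum.cong refl) (auto simp: power_add[symmetric] add.commute mult_ac intro!: arg_cong[where f="power z"])
  also have "\<dots> = (\<Sum>m1=b..a+b. \<Sum>m2=0..b. z^(a + b - m1) * z^(b - m2) * (x^Suc m1 * y^m2 - x^m2 * y^Suc m1))"
    by (intro sum.cong refl) (simp add: diff_mult_sum_power_symmetric)
  also have "\<dots> = (\<Sum>m1=b..a+b. \<Sum>m2=0..b.
      x * ((x^m1 * z^(a + b - m1)) * (y^m2 * z^(b - m2))) - y * ((y^m1 * z^(a + b - m1)) * (x^m2 * z^(b - m2))))"
    by (intro sum.cong refl) (simp add: algebra_simps)
  also have "\<dots> = x * (X x * Y y) - y * (X y * Y x)"
    unfolding X_def Y_def sum_product by (simp only: sum_distrib_left sum_subtractf)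
  finally have diff_mult_char: "(x - y) * sl3_char a b x y z = x * (X x * Y y) - y * (X y * Y x)" .
  have X_telescopes: "(u - z) * X u = u^Suc (a + b) - u^b * z^Suc a" for u
    unfolding X_def using diff_mult_sum_power_ivl[of b "a + b" u z] by (simp add: Suc_diff_le)
  have Y_telescopes: "(u - z) * Y u = u^Suc b - z^Suc b" for u
    unfolding Y_def using diff_mult_sum_power_ivl[of 0 b u z] by simp
  have "vandermonde3 x y z * sl3_char a b x y z = (x - z) * (y - z) * ((x - y) * sl3_char a b x y z)"
    by (simp add: vandermonde3_def mult_ac)
  also have "\<dots> = x * ((x - z) * X x) * ((y - z) * Y y) - y * ((y - z) * X y) * ((x - z) * Y x)"
    unfolding diff_mult_char by (simp add: algebra_simps)
  also have "\<dots> = x * (x^Suc (a + b) - x^b * z^Suc a) * (y^Suc b - z^Suc b)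
      - y * (y^Suc (a + b) - y^b * z^Suc a) * (x^Suc b - z^Suc b)"
    unfolding X_telescopes Y_telescopes ..
  also have "\<dots> = alternant (a + b + 2) (b + 1) 0 x y z"
    by (simp add: alternant_def antisym3_def algebra_simps power_add)
  finally show ?thesis .
qed

lemma pair_sums3_mult_alternating_alternants_12:
  fixes x y z :: "'a::comm_ring_1"
  assumes E_eq: "E = F + 2*p + 1"
  shows "pair_sums3 x y z * (\<Sum>k=0..p. (-1)^k * alternant (E - k) (F + k) G x y z)
    = antisym3 (\<lambda>a b c. (a + c) * (b + c) * (a^(E + 1) * b^F * c^G)) x y z"
proof -
  have pointwise: "pair_sums3 a b c * (\<Sum>k=0..p. (-1)^k * (a^(E - k) * b^(F + k) * c^G))
      = (a + c) * (b + c) * (a^(E + 1) * b^F * c^G) + (-1)^p * ((a + c) * (b + c) * c^G * (a * b)^(F + p + 1))" for a b c :: 'a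
  proof -
    have "(\<Sum>k=0..p. (-1)^k * (a^(E - k) * b^(F + k) * c^G))
        = a^(F + p + 1) * b^F * c^G * (\<Sum>k=0..p. (-1)^k * (a^(p - k) * b^k))"
      unfolding sum_distrib_left
    proof (rule sum.cong)
      fix k assume "k \<in> {0..p}"
      then have "E - k = (F + p + 1) + (p - k)" using E_eq by auto
      then show "(-1)^k * (a^(E - k) * b^(F + k) * c^G) = a^(F + p + 1) * b^F * c^G * ((-1)^k * (a^(p - k) * b^k))"
        by (simp add: power_add mult_ac)
    qed simp
    then have "pair_sums3 a b c * (\<Sum>k=0..p. (-1)^k * (a^(E - k) * b^(F + k) * c^G))
        = (a + c) * (b + c) * (a^(F + p + 1) * b^F * c^G) * ((a + b) * (\<Sum>k=0..p. (-1)^k * (a^(p - k) * b^k)))"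
      by (simp add: pair_sums3_def mult_ac)
    also have "\<dots> = (a + c) * (b + c) * (a^(F + p + 1) * b^F * c^G) * (a^Suc p + (-1)^p * b^Suc p)"
      by (simp only: add_mult_alternating_power_sum)
    also have "\<dots> = (a + c) * (b + c) * (a^(E + 1) * b^F * c^G) + (-1)^p * ((a + c) * (b + c) * c^G * (a * b)^(F + p + 1))"
      unfolding E_eq mult_2 by (simp add: power_add power_mult_distrib algebra_simps)
    finally show ?thesis .
  qed
  have symmetric_part: "antisym3 (\<lambda>a b c. (a + c) * (b + c) * c^G * (a * b)^(F + p + 1)) x y z = 0"
    by (rule antisym3_eq_0_if_swap12_invariant) (simp add: mult_ac)
  have "pair_sums3 x y z * (\<Sum>k=0..p. (-1)^k * alternant (E - k) (F + k) G x y z)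
      = pair_sums3 x y z * antisym3 (\<lambda>a b c. \<Sum>k=0..p. (-1)^k * (a^(E - k) * b^(F + k) * c^G)) x y z"
    by (simp add: alternant_def antisym3_sum antisym3_const_mult)
  also have "\<dots> = antisym3 (\<lambda>a b c. (a + c) * (b + c) * (a^(E + 1) * b^F * c^G) + (-1)^p * ((a + c) * (b + c) * c^G * (a * b)^(F + p + 1))) x y z"
    unfolding pair_sums3_mult_antisym3 pointwise ..
  finally show ?thesis
    by (simp only: antisym3_add antisym3_const_mult symmetric_part) simp
qed

lemma pair_sums3_mult_alternating_alternants_23:
  fixes x y z :: "'a::comm_ring_1"
  assumes F_eq: "F = G + 2*q + 1"
  shows "pair_sums3 x y z * (\<Sum>k=0..q. (-1)^k * alternant E (F - k) (G + k) x y z)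
    = antisym3 (\<lambda>a b c. (a + b) * (a + c) * (a^E * b^(F + 1) * c^G)) x y z"
proof -
  have pointwise: "pair_sums3 a b c * (\<Sum>k=0..q. (-1)^k * (a^E * b^(F - k) * c^(G + k)))
      = (a + b) * (a + c) * (a^E * b^(F + 1) * c^G) + (-1)^q * ((a + b) * (a + c) * a^E * (b * c)^(G + q + 1))" for a b c :: 'a
  proof -
    have "(\<Sum>k=0..q. (-1)^k * (a^E * b^(F - k) * c^(G + k)))
        = a^E * b^(G + q + 1) * c^G * (\<Sum>k=0..q. (-1)^k * (b^(q - k) * c^k))"
      unfolding sum_distrib_left
    proof (rule sum.cong)
      fix k assume "k \<in> {0..q}"
      then have "F - k = (G + q + 1) + (q - k)" using F_eq by auto
      then show "(-1)^k * (a^E * b^(F - k) * c^(G + k)) = a^E * b^(G + q + 1) * c^G * ((-1)^k * (b^(q - k) * c^k))"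
        by (simp add: power_add mult_ac)
    qed simp
    then have "pair_sums3 a b c * (\<Sum>k=0..q. (-1)^k * (a^E * b^(F - k) * c^(G + k)))
        = (a + b) * (a + c) * (a^E * b^(G + q + 1) * c^G) * ((b + c) * (\<Sum>k=0..q. (-1)^k * (b^(q - k) * c^k)))"
      by (simp add: pair_sums3_def mult_ac)
    also have "\<dots> = (a + b) * (a + c) * (a^E * b^(G + q + 1) * c^G) * (b^Suc q + (-1)^q * c^Suc q)"
      by (simp only: add_mult_alternating_power_sum)
    also have "\<dots> = (a + b) * (a + c) * (a^E * b^(F + 1) * c^G) + (-1)^q * ((a + b) * (a + c) * a^E * (b * c)^(G + q + 1))"
      unfolding F_eq mult_2 by (simp add: power_add power_mult_distrib algebra_simps)
    finally show ?thesis .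
  qed
  have symmetric_part: "antisym3 (\<lambda>a b c. (a + b) * (a + c) * a^E * (b * c)^(G + q + 1)) x y z = 0"
    by (rule antisym3_eq_0_if_swap23_invariant) (simp add: mult_ac)
  have "pair_sums3 x y z * (\<Sum>k=0..q. (-1)^k * alternant E (F - k) (G + k) x y z)
      = pair_sums3 x y z * antisym3 (\<lambda>a b c. \<Sum>k=0..q. (-1)^k * (a^E * b^(F - k) * c^(G + k))) x y z"
    by (simp add: alternant_def antisym3_sum antisym3_const_mult)
  also have "\<dots> = antisym3 (\<lambda>a b c. (a + b) * (a + c) * (a^E * b^(F + 1) * c^G) + (-1)^q * ((a + b) * (a + c) * a^E * (b * c)^(G + q + 1))) x y z"
    unfolding pair_sums3_mult_antisym3 pointwise ..
  finally show ?thesis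
    by (simp only: antisym3_add antisym3_const_mult symmetric_part) simp
qed

lemma pair_sums3_mult_alternating_alternants:
  fixes x y z :: "'a::comm_ring_1"
  assumes "E = F + 2*p + 1" and "F = G + 2*q + 1"
  shows "pair_sums3 x y z * ((\<Sum>k=0..p. (-1)^k * alternant (E - k) (F + k) G x y z)
      + (\<Sum>k=0..q. (-1)^k * alternant E (F - k) (G + k) x y z) - alternant E F G x y z)
    = alternant (E + 2) (F + 1) G x y z - alternant E (F + 1) (G + 2) x y z"
proof -
  define f1 where "f1 a b c = (a + c) * (b + c) * (a^(E + 1) * b^F * c^G)" for a b c :: 'a
  define f2 where "f2 a b c = (a + b) * (a + c) * (a^E * b^(F + 1) * c^G)" for a b c :: 'a
  have first: "pair_sums3 x y z * (\<Sum>k=0..p. (-1)^k * alternant (E - k) (F + k) G x y z) = antisym3 f1 x y z"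
    unfolding f1_def using assms(1) by (rule pair_sums3_mult_alternating_alternants_12)
  have second: "pair_sums3 x y z * (\<Sum>k=0..q. (-1)^k * alternant E (F - k) (G + k) x y z) = antisym3 f2 x y z"
    unfolding f2_def using assms(2) by (rule pair_sums3_mult_alternating_alternants_23)
  have combined: "f1 a b c + f2 a b c - pair_sums3 a b c * (a^E * b^F * c^G)
      = a^(E + 2) * b^(F + 1) * c^G - a^E * b^(F + 1) * c^(G + 2)" for a b c :: 'a
    unfolding f1_def f2_def pair_sums3_def by (simp add: power_add power2_eq_square algebra_simps)
  have "pair_sums3 x y z * ((\<Sum>k=0..p. (-1)^k * alternant (E - k) (F + k) G x y z)
      + (\<Sum>k=0..q. (-1)^k * alternant E (F - k) (G + k) x y z) - alternant E F G x y z)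
      = antisym3 f1 x y z + antisym3 f2 x y z - antisym3 (\<lambda>a b c. pair_sums3 a b c * (a^E * b^F * c^G)) x y z"
    unfolding distrib_left right_diff_distrib first second
    by (simp only: alternant_def pair_sums3_mult_antisym3)
  also have "\<dots> = antisym3 (\<lambda>a b c. a^(E + 2) * b^(F + 1) * c^G - a^E * b^(F + 1) * c^(G + 2)) x y z"
    unfolding antisym3_add[symmetric] antisym3_diff[symmetric] combined ..
  also have "\<dots> = alternant (E + 2) (F + 1) G x y z - alternant E (F + 1) (G + 2) x y z"
    unfolding alternant_def by (rule antisym3_diff)
  finally show ?thesis .
qed

lemma vandermonde3_mult_shifted_sl3_char:
  assumes "p = a + b + 2 + c" and "q = b + 1 + c"
  shows "vandermonde3 x y z * ((x * y * z)^c * sl3_char a b x y z) = alternant p q c x y z"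
proof -
  have "vandermonde3 x y z * ((x * y * z)^c * sl3_char a b x y z)
      = (x * y * z)^c * (vandermonde3 x y z * sl3_char a b x y z)"
    by (simp add: mult_ac)
  then show ?thesis
    using assms by (simp add: vandermonde3_mult_sl3_char prod_power_mult_alternant)
qed

text \<open>The l-th summand of the right-hand side, each character multiplied by the power of
x y z that makes it homogeneous of degree 2 m1 + 4 m2, like the left-hand side; on the torus
x y z = 1 these factors are 1.\<close>
definition sl3_adams2_layer :: "nat \<Rightarrow> nat \<Rightarrow> nat \<Rightarrow> complex \<Rightarrow> complex \<Rightarrow> complex \<Rightarrow> complex" where
  "sl3_adams2_layer m1 m2 l x y z =
      (\<Sum>k=0..m1 - l. (-1)^k * ((x * y * z)^(2*l) * sl3_char (2*m1 - 2*k - 2*l) (2*m2 + k - 2*l) x y z))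
    + (\<Sum>k=0..m2 - l. (-1)^k * ((x * y * z)^(k + 2*l) * sl3_char (2*m1 + k - 2*l) (2*m2 - 2*k - 2*l) x y z))
    - (x * y * z)^(2*l) * sl3_char (2*m1 - 2*l) (2*m2 - 2*l) x y z"

lemma vandermonde3_pair_sums3_mult_layer:
  assumes "l \<le> min m1 m2"
  shows "vandermonde3 x y z * pair_sums3 x y z * sl3_adams2_layer m1 m2 l x y z
    = alternant (2*m1 + 2*m2 + 4 - 2*l) (2*m2 + 2) (2*l) x y z
    - alternant (2*m1 + 2*m2 + 4 - 2*Suc l) (2*m2 + 2) (2*Suc l) x y z"
proof -
  define E where "E = 2*m1 + 2*m2 + 2 - 2*l"
  define F where "F = 2*m2 + 1"
  have weyl: "vandermonde3 x y z * sl3_adams2_layer m1 m2 l x y z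
    = (\<Sum>k=0..m1 - l. (-1)^k * alternant (E - k) (F + k) (2*l) x y z)
    + (\<Sum>k=0..m2 - l. (-1)^k * alternant E (F - k) (2*l + k) x y z) - alternant E F (2*l) x y z"
    unfolding sl3_adams2_layer_def distrib_left right_diff_distrib sum_distrib_left
  proof (intro arg_cong2[where f="(-)"] arg_cong2[where f="(+)"] sum.cong refl)
    fix k assume "k \<in> {0..m1 - l}"
    then have "vandermonde3 x y z * ((x * y * z)^(2*l) * sl3_char (2*m1 - 2*k - 2*l) (2*m2 + k - 2*l) x y z)
        = alternant (E - k) (F + k) (2*l) x y z"
      using assms by (intro vandermonde3_mult_shifted_sl3_char) (auto simp: E_def F_def)
    then show "vandermonde3 x y z * ((-1)^k * ((x * y * z)^(2*l) * sl3_char (2*m1 - 2*k - 2*l) (2*m2 + k - 2*l) x y z))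
        = (-1)^k * alternant (E - k) (F + k) (2*l) x y z"
      by (simp add: mult.left_commute)
  next
    fix k assume "k \<in> {0..m2 - l}"
    then have "vandermonde3 x y z * ((x * y * z)^(2*l + k) * sl3_char (2*m1 + k - 2*l) (2*m2 - 2*k - 2*l) x y z)
        = alternant E (F - k) (2*l + k) x y z"
      using assms by (intro vandermonde3_mult_shifted_sl3_char) (auto simp: E_def F_def)
    then show "vandermonde3 x y z * ((-1)^k * ((x * y * z)^(k + 2*l) * sl3_char (2*m1 + k - 2*l) (2*m2 - 2*k - 2*l) x y z))
        = (-1)^k * alternant E (F - k) (2*l + k) x y z"
      by (simp add: mult.left_commute add.commute)
  next
    show "vandermonde3 x y z * ((x * y * z)^(2*l) * sl3_char (2*m1 - 2*l) (2*m2 - 2*l) x y z)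
        = alternant E F (2*l) x y z"
      using assms by (intro vandermonde3_mult_shifted_sl3_char) (auto simp: E_def F_def)
  qed
  have "E = F + 2*(m1 - l) + 1" and "F = 2*l + 2*(m2 - l) + 1"
    using assms by (auto simp: E_def F_def)
  note telescoped = pair_sums3_mult_alternating_alternants[OF this, of x y z]
  have exponents: "E + 2 = 2*m1 + 2*m2 + 4 - 2*l" "E = 2*m1 + 2*m2 + 4 - 2*Suc l" "F + 1 = 2*m2 + 2"
    using assms by (auto simp: E_def F_def)
  have "vandermonde3 x y z * pair_sums3 x y z * sl3_adams2_layer m1 m2 l x y z
      = pair_sums3 x y z * (vandermonde3 x y z * sl3_adams2_layer m1 m2 l x y z)"
    by (simp add: mult_ac)
  also have "\<dots> = alternant (E + 2) (F + 1) (2*l) x y z - alternant E (F + 1) (2*l + 2) x y z"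
    unfolding weyl telescoped ..
  also have "\<dots> = alternant (2*m1 + 2*m2 + 4 - 2*l) (2*m2 + 2) (2*l) x y z
      - alternant (2*m1 + 2*m2 + 4 - 2*Suc l) (2*m2 + 2) (2*Suc l) x y z"
    using exponents by simp
  finally show ?thesis .
qed

lemma vandermonde3_pair_sums3_mult_adams2_sl3_char_eq_layers:
  "vandermonde3 x y z * pair_sums3 x y z * sl3_char m1 m2 (x^2) (y^2) (z^2)
    = vandermonde3 x y z * pair_sums3 x y z * (\<Sum>l=0..min m1 m2. sl3_adams2_layer m1 m2 l x y z)"
proof -
  define u where "u l = alternant (2*m1 + 2*m2 + 4 - 2*l) (2*m2 + 2) (2*l) x y z" for l
  have "vandermonde3 x y z * pair_sums3 x y z * sl3_char m1 m2 (x^2) (y^2) (z^2) = u 0"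
    unfolding u_def vandermonde3_squares[symmetric] vandermonde3_mult_sl3_char alternant_squares
    by (simp add: algebra_simps) (simp add: eval_nat_numeral)
  moreover have "u (Suc (min m1 m2)) = 0"
  proof (cases "m1 \<le> m2")
    case True
    then have "2*m1 + 2*m2 + 4 - 2*Suc (min m1 m2) = 2*m2 + 2" by simp
    then show ?thesis unfolding u_def by simp
  next
    case False
    then have "2*Suc (min m1 m2) = 2*m2 + 2" by simp
    then show ?thesis unfolding u_def by simp
  qed
  moreover have "vandermonde3 x y z * pair_sums3 x y z * (\<Sum>l=0..min m1 m2. sl3_adams2_layer m1 m2 l x y z)
      = (\<Sum>l=0..min m1 m2. u l - u (Suc l))"
    unfolding sum_distrib_left u_def by (intro sum.cong refl) (simp add: vandermonde3_pair_sums3_mult_layer)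
  ultimately show ?thesis
    by (simp add: sum_telescope atLeast0AtMost)
qed

lemma eq_0_if_vandermonde3_pair_sums3_mult_eq_0:
  fixes D :: "complex \<Rightarrow> complex \<Rightarrow> complex \<Rightarrow> complex"
  assumes vanish: "\<And>u v w. vandermonde3 u v w * pair_sums3 u v w * D u v w = 0"
    and cont: "isCont (\<lambda>t. D (x + t) (y + 2*t) (z + 4*t)) 0"
  shows "D x y z = 0"
proof -
  \<comment> \<open>the six linear factors of the product have nonzero slope along the line, so each
      vanishes at exactly one of these points\<close>
  define S where "S = {x - y, (x - z) / 3, (y - z) / 2, - (x + y) / 3, - (x + z) / 5, - (y + z) / 6}"
  have "D (x + t) (y + 2*t) (z + 4*t) = 0" if "t \<notin> S" for t
  proof -
    from that have "(x + t) - (y + 2*t) \<noteq> 0" "(x + t) - (z + 4*t) \<noteq> 0" "(y + 2*t) - (z + 4*t) \<noteq> 0"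
      "(x + t) + (y + 2*t) \<noteq> 0" "(x + t) + (z + 4*t) \<noteq> 0" "(y + 2*t) + (z + 4*t) \<noteq> 0"
      unfolding S_def by (auto simp: field_simps eq_neg_iff_add_eq_0)
    then have "vandermonde3 (x + t) (y + 2*t) (z + 4*t) * pair_sums3 (x + t) (y + 2*t) (z + 4*t) \<noteq> 0"
      unfolding vandermonde3_def pair_sums3_def by (simp only: mult_eq_0_iff de_Morgan_disj) simp
    then show ?thesis
      using vanish[of "x + t" "y + 2*t" "z + 4*t"] by simp
  qed
  moreover have "\<forall>\<^sub>F t in at 0. \<forall>s\<in>S. t \<noteq> s"
    by (rule eventually_ball_finite) (auto simp: S_def eventually_neq_at_within)
  ultimately have "\<forall>\<^sub>F t in at 0. D (x + t) (y + 2*t) (z + 4*t) = 0"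
    by (auto elim!: eventually_mono)
  then have "((\<lambda>t. D (x + t) (y + 2*t) (z + 4*t)) \<longlongrightarrow> 0) (at 0)"
    by (rule tendsto_eventually)
  moreover have "((\<lambda>t. D (x + t) (y + 2*t) (z + 4*t)) \<longlongrightarrow> D x y z) (at 0)"
    using cont by (simp add: isCont_def)
  ultimately show ?thesis
    using tendsto_unique[OF at_neq_bot] by blast
qed

theorem theorem2:
  fixes m1 m2 :: nat and x1 x2 x3 :: complex
  assumes "x1 * x2 * x3 = 1"
  shows "adams2 (sl3_char m1 m2) x1 x2 x3 =
      (\<Sum>l\<in>{0..min m1 m2}. \<Sum>k\<in>{0..m1 - l}.
          (-1) ^ k * sl3_char (2*m1 - 2*k - 2*l) (2*m2 + k - 2*l) x1 x2 x3)
    + (\<Sum>l\<in>{0..min m1 m2}. \<Sum>k\<in>{0..m2 - l}.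
          (-1) ^ k * sl3_char (2*m1 + k - 2*l) (2*m2 - 2*k - 2*l) x1 x2 x3)
    - (\<Sum>l\<in>{0..min m1 m2}. sl3_char (2*m1 - 2*l) (2*m2 - 2*l) x1 x2 x3)"
proof -
  have "sl3_char m1 m2 (x1^2) (x2^2) (x3^2) - (\<Sum>l=0..min m1 m2. sl3_adams2_layer m1 m2 l x1 x2 x3) = 0"
  proof (rule eq_0_if_vandermonde3_pair_sums3_mult_eq_0[where D = "\<lambda>x y z.
      sl3_char m1 m2 (x^2) (y^2) (z^2) - (\<Sum>l=0..min m1 m2. sl3_adams2_layer m1 m2 l x y z)"])
    show "vandermonde3 x y z * pair_sums3 x y z *
        (sl3_char m1 m2 (x^2) (y^2) (z^2) - (\<Sum>l=0..min m1 m2. sl3_adams2_layer m1 m2 l x y z)) = 0" for x y z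
      by (simp add: right_diff_distrib vandermonde3_pair_sums3_mult_adams2_sl3_char_eq_layers)
    show "isCont (\<lambda>t. sl3_char m1 m2 ((x1 + t)^2) ((x2 + 2*t)^2) ((x3 + 4*t)^2)
        - (\<Sum>l=0..min m1 m2. sl3_adams2_layer m1 m2 l (x1 + t) (x2 + 2*t) (x3 + 4*t))) 0"
      unfolding sl3_char_def sl3_adams2_layer_def by (intro continuous_intros)
  qed
  then show ?thesis
    using assms by (simp add: adams2_def sl3_adams2_layer_def sum.distrib sum_subtractf)
qed

end
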